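(* Let $(L,\delta,\alpha,\beta)$ be a BiHom-Lie algebra, let $(V,\alpha_V,\beta_V)$ be an abelian BiHom-Lie algebra, and let $d\colon (L\oplus V)\times(L\oplus V)\to L\oplus V$ be a bilinear map. Let $i_0\colon V\to L\oplus V$, $i_0(v)=v$, and $\pi_0\colon L\oplus V\to L$, $\pi_0(x+v)=x$. Then $(L\oplus V,d,\alpha+\alpha_V,\beta+\beta_V)$ is a BiHom-Lie algebra and $$0\longrightarrow (V,\alpha_V,\beta_V)\xrightarrow{\ i_0\ }(L\oplus V,d,\alpha+\alpha_V,\beta+\beta_V)\xrightarrow{\ \pi_0\ }(L,\delta,\alpha,\beta)\longrightarrow 0$$ is an extension of $L$ by $V$ if and only if there exist bilinear maps $\lambda_l\colon L\times V\to V$, $\lambda_r\colon V\times L\to V$ and $\theta\colon L\times L\to V$ such that $$d(x+v,y+w)=\delta(x,y)+\theta(x,y)+\lambda_l(x,w)+\lambda_r(v,y)\quad\text{for all }x,y\in L,\ v,w\in V,$$ $(\lambda_l,\lambda_r)$ is a representation of $L$ on $V$, and $\theta$ is a $2$-cocycle of $L$ on $V$ with respect to this representation.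
   Context: All vector spaces are over a field $\mathbb{K}$. A BiHom-Lie algebra $(L,[\cdot,\cdot],\alpha,\beta)$ is a vector space $L$ with a bilinear map $[\cdot,\cdot]\colon L\times L\to L$ and linear maps $\alpha,\beta\colon L\to L$ such that $\alpha\circ\beta=\beta\circ\alpha$, $[\beta(x),\alpha(y)]=-[\beta(y),\alpha(x)]$, and $[\beta^2(x),[\beta(y),\alpha(z)]]+[\beta^2(y),[\beta(z),\alpha(x)]]+[\beta^2(z),[\beta(x),\alpha(y)]]=0$ for all $x,y,z\in L$ ($\alpha,\beta$ need not be multiplicative). A morphism $f\colon(L,[\cdot,\cdot],\alpha,\beta)\to(L',[\cdot,\cdot]',\alpha',\beta')$ is a linear map with $f\circ\alpha=\alpha'\circ f$, $f\circ\beta=\beta'\circ f$, $f([x,y])=[f(x),f(y)]'$. An abelian BiHom-Lie algebra $(V,\alpha_V,\beta_V)$ is a BiHom-Lie algebra whose bracket is identically zero (so $\alpha_V,\beta_V$ are commuting linear maps). On $L\oplus V$, $\alpha+\alpha_V$ denotes $x+v\mapsto \alpha(x)+\alpha_V(v)$, and similarly $\beta+\beta_V$. An extension of $(L,\delta,\alpha,\beta)$ by $(V,\mu,\alpha_V,\beta_V)$ is a sequence $0\to V\xrightarrow{i}M\xrightarrow{\pi}L\to 0$ of BiHom-Lie algebras and BiHom-Lie morphisms with $i$ injective, $\pi$ surjective and $\mathrm{Im}(i)=\ker(\pi)$. A representation of the BiHom-Lie algebra $(L,\delta,\alpha,\beta)$ on the abelian BiHom-Lie algebra $(V,\alpha_V,\beta_V)$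 is a pair of bilinear maps $\lambda_l\colon L\times V\to V$, $\lambda_r\colon V\times L\to V$ such that for all $x,y\in L$, $v\in V$: $\lambda_r(\beta_V(v),\alpha(y))=-\lambda_l(\beta(y),\alpha_V(v))$ and $\lambda_l(\beta^2(x),\lambda_l(\beta(y),\alpha_V(v)))+\lambda_l(\beta^2(y),\lambda_r(\beta_V(v),\alpha(x)))+\lambda_r(\beta_V^2(v),\delta(\beta(x),\alpha(y)))=0$. Given such a representation, a $2$-cocycle of $L$ on $V$ is a bilinear map $\theta\colon L\times L\to V$ with $\theta(\beta(x),\alpha(y))=-\theta(\beta(y),\alpha(x))$ and $\theta(\beta^2(x),\delta(\beta(y),\alpha(z)))-\theta(\beta^2(y),\delta(\beta(x),\alpha(z)))+\theta(\beta^2(z),\delta(\beta(x),\alpha(y)))+\lambda_l(\beta^2(x),\theta(\beta(y),\alpha(z)))-\lambda_l(\beta^2(y),\theta(\beta(x),\alpha(z)))+\lambda_l(\beta^2(z),\theta(\beta(x),\alpha(y)))=0$ for all $x,y,z\in L$. *)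

theory Defs
  imports Complex_Main "HOL-Library.Product_Plus"
begin

text \<open>Vector spaces over a field 'k are types of class ab_group_add together with a
scalar multiplication s satisfying the axioms of the library locale vector_space.\<close>

definition bilin ::
  "('k::field \<Rightarrow> 'a::ab_group_add \<Rightarrow> 'a) \<Rightarrow> ('k \<Rightarrow> 'b::ab_group_add \<Rightarrow> 'b)
   \<Rightarrow> ('k \<Rightarrow> 'c::ab_group_add \<Rightarrow> 'c) \<Rightarrow> ('a \<Rightarrow> 'b \<Rightarrow> 'c) \<Rightarrow> bool" where
  "bilin s1 s2 s3 f \<longleftrightarrow>
     (\<forall>x. Vector_Spaces.linear s2 s3 (f x)) \<and> (\<forall>y. Vector_Spaces.linear s1 s3 (\<lambda>x. f x y))"

definition bihom_lie ::
  "('k::field \<Rightarrow> 'a::ab_group_add \<Rightarrow> 'a) \<Rightarrow> ('a \<Rightarrow> 'a \<Rightarrow> 'a) \<Rightarrow> ('a \<Rightarrow> 'a) \<Rightarrow> ('a \<Rightarrow> 'a) \<Rightarrow> bool" where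
  "bihom_lie s br \<alpha> \<beta> \<longleftrightarrow>
     vector_space s \<and> bilin s s s br \<and>
     Vector_Spaces.linear s s \<alpha> \<and> Vector_Spaces.linear s s \<beta> \<and>
     \<alpha> \<circ> \<beta> = \<beta> \<circ> \<alpha> \<and>
     (\<forall>x y. br (\<beta> x) (\<alpha> y) = - br (\<beta> y) (\<alpha> x)) \<and>
     (\<forall>x y z. br (\<beta> (\<beta> x)) (br (\<beta> y) (\<alpha> z)) + br (\<beta> (\<beta> y)) (br (\<beta> z) (\<alpha> x))
              + br (\<beta> (\<beta> z)) (br (\<beta> x) (\<alpha> y)) = 0)"

definition abelian_bihom_lie ::
  "('k::field \<Rightarrow> 'a::ab_group_add \<Rightarrow> 'a) \<Rightarrow> ('a \<Rightarrow> 'a) \<Rightarrow> ('a \<Rightarrow> 'a) \<Rightarrow> bool" where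
  "abelian_bihom_lie s \<alpha> \<beta> \<longleftrightarrow> bihom_lie s (\<lambda>_ _. 0) \<alpha> \<beta>"

definition bihom_morphism ::
  "('k::field \<Rightarrow> 'a::ab_group_add \<Rightarrow> 'a) \<Rightarrow> ('a \<Rightarrow> 'a \<Rightarrow> 'a) \<Rightarrow> ('a \<Rightarrow> 'a) \<Rightarrow> ('a \<Rightarrow> 'a)
   \<Rightarrow> ('k \<Rightarrow> 'b::ab_group_add \<Rightarrow> 'b) \<Rightarrow> ('b \<Rightarrow> 'b \<Rightarrow> 'b) \<Rightarrow> ('b \<Rightarrow> 'b) \<Rightarrow> ('b \<Rightarrow> 'b)
   \<Rightarrow> ('a \<Rightarrow> 'b) \<Rightarrow> bool" where
  "bihom_morphism s1 br1 \<alpha>1 \<beta>1 s2 br2 \<alpha>2 \<beta>2 f \<longleftrightarrow>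
     Vector_Spaces.linear s1 s2 f \<and> f \<circ> \<alpha>1 = \<alpha>2 \<circ> f \<and> f \<circ> \<beta>1 = \<beta>2 \<circ> f \<and>
     (\<forall>x y. f (br1 x y) = br2 (f x) (f y))"

definition bihom_extension ::
  "('k::field \<Rightarrow> 'v::ab_group_add \<Rightarrow> 'v) \<Rightarrow> ('v \<Rightarrow> 'v \<Rightarrow> 'v) \<Rightarrow> ('v \<Rightarrow> 'v) \<Rightarrow> ('v \<Rightarrow> 'v)
   \<Rightarrow> ('v \<Rightarrow> 'm)
   \<Rightarrow> ('k \<Rightarrow> 'm::ab_group_add \<Rightarrow> 'm) \<Rightarrow> ('m \<Rightarrow> 'm \<Rightarrow> 'm) \<Rightarrow> ('m \<Rightarrow> 'm) \<Rightarrow> ('m \<Rightarrow> 'm)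
   \<Rightarrow> ('m \<Rightarrow> 'l)
   \<Rightarrow> ('k \<Rightarrow> 'l::ab_group_add \<Rightarrow> 'l) \<Rightarrow> ('l \<Rightarrow> 'l \<Rightarrow> 'l) \<Rightarrow> ('l \<Rightarrow> 'l) \<Rightarrow> ('l \<Rightarrow> 'l) \<Rightarrow> bool" where
  "bihom_extension sV brV \<alpha>V \<beta>V i sM brM \<alpha>M \<beta>M p sL brL \<alpha>L \<beta>L \<longleftrightarrow>
     bihom_lie sV brV \<alpha>V \<beta>V \<and> bihom_lie sM brM \<alpha>M \<beta>M \<and> bihom_lie sL brL \<alpha>L \<beta>L \<and>
     bihom_morphism sV brV \<alpha>V \<beta>V sM brM \<alpha>M \<beta>M i \<and>
     bihom_morphism sM brM \<alpha>M \<beta>M sL brL \<alpha>L \<beta>L p \<and>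
     inj i \<and> surj p \<and> range i = {m. p m = 0}"

definition bihom_rep ::
  "('k::field \<Rightarrow> 'l::ab_group_add \<Rightarrow> 'l) \<Rightarrow> ('l \<Rightarrow> 'l \<Rightarrow> 'l) \<Rightarrow> ('l \<Rightarrow> 'l) \<Rightarrow> ('l \<Rightarrow> 'l)
   \<Rightarrow> ('k \<Rightarrow> 'v::ab_group_add \<Rightarrow> 'v) \<Rightarrow> ('v \<Rightarrow> 'v) \<Rightarrow> ('v \<Rightarrow> 'v)
   \<Rightarrow> ('l \<Rightarrow> 'v \<Rightarrow> 'v) \<Rightarrow> ('v \<Rightarrow> 'l \<Rightarrow> 'v) \<Rightarrow> bool" where
  "bihom_rep sL \<delta> \<alpha> \<beta> sV \<alpha>V \<beta>V lamL lamR \<longleftrightarrow>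
     bilin sL sV sV lamL \<and> bilin sV sL sV lamR \<and>
     (\<forall>y v. lamR (\<beta>V v) (\<alpha> y) = - lamL (\<beta> y) (\<alpha>V v)) \<and>
     (\<forall>x y v. lamL (\<beta> (\<beta> x)) (lamL (\<beta> y) (\<alpha>V v)) + lamL (\<beta> (\<beta> y)) (lamR (\<beta>V v) (\<alpha> x))
              + lamR (\<beta>V (\<beta>V v)) (\<delta> (\<beta> x) (\<alpha> y)) = 0)"

definition bihom_2cocycle ::
  "('k::field \<Rightarrow> 'l::ab_group_add \<Rightarrow> 'l) \<Rightarrow> ('l \<Rightarrow> 'l \<Rightarrow> 'l) \<Rightarrow> ('l \<Rightarrow> 'l) \<Rightarrow> ('l \<Rightarrow> 'l)
   \<Rightarrow> ('k \<Rightarrow> 'v::ab_group_add \<Rightarrow> 'v) \<Rightarrow> ('l \<Rightarrow> 'v \<Rightarrow> 'v) \<Rightarrow> ('l \<Rightarrow> 'l \<Rightarrow> 'v) \<Rightarrow> bool" where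
  "bihom_2cocycle sL \<delta> \<alpha> \<beta> sV lamL \<theta> \<longleftrightarrow>
     bilin sL sL sV \<theta> \<and>
     (\<forall>x y. \<theta> (\<beta> x) (\<alpha> y) = - \<theta> (\<beta> y) (\<alpha> x)) \<and>
     (\<forall>x y z. \<theta> (\<beta> (\<beta> x)) (\<delta> (\<beta> y) (\<alpha> z)) - \<theta> (\<beta> (\<beta> y)) (\<delta> (\<beta> x) (\<alpha> z))
              + \<theta> (\<beta> (\<beta> z)) (\<delta> (\<beta> x) (\<alpha> y))
              + lamL (\<beta> (\<beta> x)) (\<theta> (\<beta> y) (\<alpha> z)) - lamL (\<beta> (\<beta> y)) (\<theta> (\<beta> x) (\<alpha> z))
              + lamL (\<beta> (\<beta> z)) (\<theta> (\<beta> x) (\<alpha> y)) = 0)"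

definition sum_scale :: "('k \<Rightarrow> 'l \<Rightarrow> 'l) \<Rightarrow> ('k \<Rightarrow> 'v \<Rightarrow> 'v) \<Rightarrow> 'k \<Rightarrow> 'l \<times> 'v \<Rightarrow> 'l \<times> 'v" where
  "sum_scale sL sV c p = (sL c (fst p), sV c (snd p))"

definition sum_map :: "('l \<Rightarrow> 'l) \<Rightarrow> ('v \<Rightarrow> 'v) \<Rightarrow> 'l \<times> 'v \<Rightarrow> 'l \<times> 'v" where
  "sum_map f g p = (f (fst p), g (snd p))"

definition inc0 :: "'v \<Rightarrow> 'l::zero \<times> 'v" where
  "inc0 v = (0, v)"

definition proj0 :: "'l \<times> 'v \<Rightarrow> 'l" where
  "proj0 p = fst p"

end

(* If i0 and pi0 are morphisms, the bracket d on L (+) V has first component delta and vanishes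
   on V x V, so by bilinearity it is determined by its mixed blocks theta (L x L -> V),
   lambda_l (L x V -> V) and lambda_r (V x L -> V).  For such a bracket, BiHom skew-symmetry
   amounts to that of theta plus the relation between lambda_l and lambda_r, and, after using
   skew-symmetry of delta and theta, the V-component of the BiHom Jacobiator of (x,u), (y,v),
   (z,w) is the 2-cocycle expression in x, y, z plus the representation identity at (x,y,w),
   (y,z,u) and (z,x,v).  Evaluating at (x,0), (y,0), (z,0) and at (x,0), (y,0), (0,v)
   separates the two conditions. *)

theory Submission
  imports Defs
begin

lemma linear_module_hom: "Vector_Spaces.linear s1 s2 f \<Longrightarrow> module_hom s1 s2 f"
  by (simp add: linear_iff_module_hom)

lemmas linear_hom_simps =
  module_hom.zero[OF linear_module_hom] module_hom.add[OF linear_module_hom]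
  module_hom.neg[OF linear_module_hom] module_hom.diff[OF linear_module_hom]
  module_hom.scale[OF linear_module_hom]

lemma bilin_linear_right: "bilin s1 s2 s3 f \<Longrightarrow> Vector_Spaces.linear s2 s3 (f x)"
  by (simp add: bilin_def)

lemma bilin_linear_left: "bilin s1 s2 s3 f \<Longrightarrow> Vector_Spaces.linear s1 s3 (\<lambda>x. f x y)"
  by (simp add: bilin_def)

lemma bilin_simps:
  assumes "bilin s1 s2 s3 f"
  shows "f x 0 = 0" "f 0 y = 0"
    "f x (y + y') = f x y + f x y'" "f (x + x') y = f x y + f x' y"
    "f x (- y) = - f x y" "f (- x) y = - f x y"
    "f x (y - y') = f x y - f x y'" "f (x - x') y = f x y - f x' y"
    "f x (s2 c y) = s3 c (f x y)" "f (s1 c x) y = s3 c (f x y)"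
  using linear_hom_simps[OF bilin_linear_right[OF assms, of x]]
    linear_hom_simps[OF bilin_linear_left[OF assms, of y]]
  by simp_all

lemma bilin_compose:
  assumes "bilin s1 s2 s3 f" "Vector_Spaces.linear t1 s1 g" "Vector_Spaces.linear t2 s2 h"
    "Vector_Spaces.linear s3 t3 k"
  shows "bilin t1 t2 t3 (\<lambda>x y. k (f (g x) (h y)))"
proof -
  have "Vector_Spaces.linear t2 t3 (k \<circ> (f (g x) \<circ> h))" for x
    using Vector_Spaces.linear_compose[OF assms(3) bilin_linear_right[OF assms(1)]] assms(4)
    by (rule Vector_Spaces.linear_compose)
  moreover have "Vector_Spaces.linear t1 t3 (k \<circ> ((\<lambda>x. f x (h y)) \<circ> g))" for y
    using Vector_Spaces.linear_compose[OF assms(2) bilin_linear_left[OF assms(1)]] assms(4)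
    by (rule Vector_Spaces.linear_compose)
  ultimately show ?thesis
    by (simp add: bilin_def comp_def)
qed

lemma vector_space_sum_scale:
  "vector_space sL \<Longrightarrow> vector_space sV \<Longrightarrow> vector_space (sum_scale sL sV)"
  unfolding vector_space_def sum_scale_def by (simp add: prod_eq_iff)

lemma vector_space_scale_zero: "vector_space s \<Longrightarrow> s c 0 = 0"
  by (metis add_cancel_right_right add_0 vector_space_def)

lemma linear_fst_sum_scale:
  "vector_space sL \<Longrightarrow> vector_space sV \<Longrightarrow> Vector_Spaces.linear (sum_scale sL sV) sL fst"
  by (simp add: Vector_Spaces.linear_iff vector_space_sum_scale sum_scale_def)

lemma linear_snd_sum_scale:
  "vector_space sL \<Longrightarrow> vector_space sV \<Longrightarrow> Vector_Spaces.linear (sum_scale sL sV) sV snd"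
  by (simp add: Vector_Spaces.linear_iff vector_space_sum_scale sum_scale_def)

lemma linear_Pair_zero_right:
  "vector_space sL \<Longrightarrow> vector_space sV \<Longrightarrow> Vector_Spaces.linear sL (sum_scale sL sV) (\<lambda>x. (x, 0))"
  by (simp add: Vector_Spaces.linear_iff vector_space_sum_scale sum_scale_def vector_space_scale_zero)

lemma linear_Pair_zero_left:
  "vector_space sL \<Longrightarrow> vector_space sV \<Longrightarrow> Vector_Spaces.linear sV (sum_scale sL sV) (\<lambda>v. (0, v))"
  by (simp add: Vector_Spaces.linear_iff vector_space_sum_scale sum_scale_def vector_space_scale_zero)

lemma linear_sum_map:
  "Vector_Spaces.linear sL sL f \<Longrightarrow> Vector_Spaces.linear sV sV g \<Longrightarrow>
   Vector_Spaces.linear (sum_scale sL sV) (sum_scale sL sV) (sum_map f g)"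
  by (simp add: Vector_Spaces.linear_iff vector_space_sum_scale sum_scale_def sum_map_def)

lemma bilin_sum_expand:
  assumes "bilin (sum_scale sL sV) (sum_scale sL sV) (sum_scale sL sV) d"
  shows "d (x, v) (y, w) = d (x, 0) (y, 0) + d (x, 0) (0, w) + d (0, v) (y, 0) + d (0, v) (0, w)"
proof -
  have "d (x, v) (y, w) = d ((x, 0) + (0, v)) ((y, 0) + (0, w))"
    by simp
  also have "\<dots> = d (x, 0) (y, 0) + d (0, v) (y, 0) + (d (x, 0) (0, w) + d (0, v) (0, w))"
    by (simp only: bilin_simps[OF assms])
  finally show ?thesis
    by (simp add: ac_simps)
qed

definition sum_bracket ::
  "('l \<Rightarrow> 'l \<Rightarrow> 'l) \<Rightarrow> ('l \<Rightarrow> 'l \<Rightarrow> 'v::plus) \<Rightarrow> ('l \<Rightarrow> 'v \<Rightarrow> 'v) \<Rightarrow> ('v \<Rightarrow> 'l \<Rightarrow> 'v)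
   \<Rightarrow> 'l \<times> 'v \<Rightarrow> 'l \<times> 'v \<Rightarrow> 'l \<times> 'v" where
  "sum_bracket \<delta> \<theta> lamL lamR p q =
     (\<delta> (fst p) (fst q), \<theta> (fst p) (fst q) + lamL (fst p) (snd q) + lamR (snd p) (fst q))"

lemma sum_bracket_Pair [simp]:
  "sum_bracket \<delta> \<theta> lamL lamR (x, v) (y, w) = (\<delta> x y, \<theta> x y + lamL x w + lamR v y)"
  by (simp add: sum_bracket_def)

lemma sum_bracket_eq_iff:
  "d = sum_bracket \<delta> \<theta> lamL lamR \<longleftrightarrow>
    (\<forall>x y v w. d (x, v) (y, w) = (\<delta> x y, \<theta> x y + lamL x w + lamR v y))"
  by (auto simp: fun_eq_iff)

lemma bilin_sum_bracket:
  assumes "vector_space sL" "vector_space sV" "bilin sL sL sL \<delta>" "bilin sL sL sV \<theta>"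
    "bilin sL sV sV lamL" "bilin sV sL sV lamR"
  shows "bilin (sum_scale sL sV) (sum_scale sL sV) (sum_scale sL sV) (sum_bracket \<delta> \<theta> lamL lamR)"
proof -
  have distrib: "sV c (a + b) = sV c a + sV c b" for c a b
    using assms(2) unfolding vector_space_def by blast
  show ?thesis
    unfolding bilin_def Vector_Spaces.linear_iff
    using assms(1,2)
    by (simp add: vector_space_sum_scale sum_bracket_def sum_scale_def distrib algebra_simps
        bilin_simps[OF assms(3)] bilin_simps[OF assms(4)]
        bilin_simps[OF assms(5)] bilin_simps[OF assms(6)])
qed

lemma sum_bracket_of_bilin:
  assumes "bilin (sum_scale sL sV) (sum_scale sL sV) (sum_scale sL sV) d"
    and "\<And>p q. fst (d p q) = \<delta> (fst p) (fst q)" and "\<And>v w. d (0, v) (0, w) = 0"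
  shows "d = sum_bracket \<delta> (\<lambda>x y. snd (d (x, 0) (y, 0))) (\<lambda>x w. snd (d (x, 0) (0, w)))
               (\<lambda>v y. snd (d (0, v) (y, 0)))"
proof (intro ext)
  fix p q
  show "d p q = sum_bracket \<delta> (\<lambda>x y. snd (d (x, 0) (y, 0))) (\<lambda>x w. snd (d (x, 0) (0, w)))
               (\<lambda>v y. snd (d (0, v) (y, 0))) p q"
    using bilin_sum_expand[OF assms(1), of "fst p" "snd p" "fst q" "snd q"]
    by (simp add: prod_eq_iff assms(2,3) sum_bracket_def)
qed

lemma sum_bracket_decomposition_iff:
  assumes vs: "vector_space sL" "vector_space sV" and \<delta>: "bilin sL sL sL \<delta>"
    and d: "bilin (sum_scale sL sV) (sum_scale sL sV) (sum_scale sL sV) d"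
  shows "(\<forall>p q. fst (d p q) = \<delta> (fst p) (fst q)) \<and> (\<forall>v w. d (0, v) (0, w) = 0) \<longleftrightarrow>
    (\<exists>lamL lamR \<theta>. bilin sL sV sV lamL \<and> bilin sV sL sV lamR \<and> bilin sL sL sV \<theta> \<and>
      d = sum_bracket \<delta> \<theta> lamL lamR)"
proof
  assume "(\<forall>p q. fst (d p q) = \<delta> (fst p) (fst q)) \<and> (\<forall>v w. d (0, v) (0, w) = 0)"
  then have "d = sum_bracket \<delta> (\<lambda>x y. snd (d (x, 0) (y, 0))) (\<lambda>x w. snd (d (x, 0) (0, w)))
      (\<lambda>v y. snd (d (0, v) (y, 0)))"
    using d by (intro sum_bracket_of_bilin) blast+
  moreover have "bilin sL sL sV (\<lambda>x y. snd (d (x, 0) (y, 0)))"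
      "bilin sL sV sV (\<lambda>x w. snd (d (x, 0) (0, w)))" "bilin sV sL sV (\<lambda>v y. snd (d (0, v) (y, 0)))"
    using bilin_compose[OF d _ _ linear_snd_sum_scale[OF vs]] linear_Pair_zero_left[OF vs]
      linear_Pair_zero_right[OF vs] by blast+
  ultimately show "\<exists>lamL lamR \<theta>. bilin sL sV sV lamL \<and> bilin sV sL sV lamR \<and> bilin sL sL sV \<theta> \<and>
      d = sum_bracket \<delta> \<theta> lamL lamR"
    by blast
next
  assume "\<exists>lamL lamR \<theta>. bilin sL sV sV lamL \<and> bilin sV sL sV lamR \<and> bilin sL sL sV \<theta> \<and>
      d = sum_bracket \<delta> \<theta> lamL lamR"
  then obtain lamL lamR \<theta> where "bilin sL sV sV lamL" "bilin sV sL sV lamR" "bilin sL sL sV \<theta>"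
    and "d = sum_bracket \<delta> \<theta> lamL lamR"
    by blast
  then show "(\<forall>p q. fst (d p q) = \<delta> (fst p) (fst q)) \<and> (\<forall>v w. d (0, v) (0, w) = 0)"
    using \<delta> by (simp add: sum_bracket_def zero_prod_def bilin_simps)
qed

definition bihom_skew :: "('a \<Rightarrow> 'a \<Rightarrow> 'b::group_add) \<Rightarrow> ('a \<Rightarrow> 'a) \<Rightarrow> ('a \<Rightarrow> 'a) \<Rightarrow> bool" where
  "bihom_skew br \<alpha> \<beta> \<longleftrightarrow> (\<forall>x y. br (\<beta> x) (\<alpha> y) = - br (\<beta> y) (\<alpha> x))"

definition bihom_jacobiator ::
  "('a \<Rightarrow> 'a \<Rightarrow> 'a::plus) \<Rightarrow> ('a \<Rightarrow> 'a) \<Rightarrow> ('a \<Rightarrow> 'a) \<Rightarrow> 'a \<Rightarrow> 'a \<Rightarrow> 'a \<Rightarrow> 'a" where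
  "bihom_jacobiator br \<alpha> \<beta> x y z =
     br (\<beta> (\<beta> x)) (br (\<beta> y) (\<alpha> z)) + br (\<beta> (\<beta> y)) (br (\<beta> z) (\<alpha> x))
     + br (\<beta> (\<beta> z)) (br (\<beta> x) (\<alpha> y))"

definition bihom_jacobi :: "('a \<Rightarrow> 'a \<Rightarrow> 'a::monoid_add) \<Rightarrow> ('a \<Rightarrow> 'a) \<Rightarrow> ('a \<Rightarrow> 'a) \<Rightarrow> bool" where
  "bihom_jacobi br \<alpha> \<beta> \<longleftrightarrow> (\<forall>x y z. bihom_jacobiator br \<alpha> \<beta> x y z = 0)"

lemma bihom_lie_iff:
  "bihom_lie s br \<alpha> \<beta> \<longleftrightarrow>
     vector_space s \<and> bilin s s s br \<and> Vector_Spaces.linear s s \<alpha> \<and> Vector_Spaces.linear s s \<beta> \<and>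
     \<alpha> \<circ> \<beta> = \<beta> \<circ> \<alpha> \<and> bihom_skew br \<alpha> \<beta> \<and> bihom_jacobi br \<alpha> \<beta>"
  by (simp add: bihom_lie_def bihom_skew_def bihom_jacobi_def bihom_jacobiator_def)

lemma bihom_lie_zero_simps:
  assumes "bihom_lie s br \<alpha> \<beta>"
  shows "\<alpha> 0 = 0" "\<beta> 0 = 0" "br x 0 = 0" "br 0 y = 0"
proof -
  have "Vector_Spaces.linear s s \<alpha>" "Vector_Spaces.linear s s \<beta>" "bilin s s s br"
    using assms by (simp_all add: bihom_lie_iff)
  then show "\<alpha> 0 = 0" "\<beta> 0 = 0" "br x 0 = 0" "br 0 y = 0"
    by (simp_all add: linear_hom_simps bilin_simps)
qed

lemma bihom_lie_sum_scale_iff: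
  assumes L: "bihom_lie sL \<delta> \<alpha> \<beta>" and V: "abelian_bihom_lie sV \<alpha>V \<beta>V"
    and d: "bilin (sum_scale sL sV) (sum_scale sL sV) (sum_scale sL sV) d"
  shows "bihom_lie (sum_scale sL sV) d (sum_map \<alpha> \<alpha>V) (sum_map \<beta> \<beta>V) \<longleftrightarrow>
    bihom_skew d (sum_map \<alpha> \<alpha>V) (sum_map \<beta> \<beta>V) \<and> bihom_jacobi d (sum_map \<alpha> \<alpha>V) (sum_map \<beta> \<beta>V)"
proof -
  have "\<alpha> (\<beta> x) = \<beta> (\<alpha> x)" "\<alpha>V (\<beta>V v) = \<beta>V (\<alpha>V v)" for x v
    using L V by (simp_all add: bihom_lie_iff abelian_bihom_lie_def comp_def fun_eq_iff)
  then have "sum_map \<alpha> \<alpha>V \<circ> sum_map \<beta> \<beta>V = sum_map \<beta> \<beta>V \<circ> sum_map \<alpha> \<alpha>V"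
    by (simp add: fun_eq_iff sum_map_def)
  with L V d show ?thesis
    by (simp add: bihom_lie_iff abelian_bihom_lie_def vector_space_sum_scale linear_sum_map)
qed

lemma bihom_skew_sum_bracket_iff:
  assumes L: "bihom_lie sL \<delta> \<alpha> \<beta>" and V: "abelian_bihom_lie sV \<alpha>V \<beta>V"
    and \<theta>: "bilin sL sL sV \<theta>" and lamL: "bilin sL sV sV lamL" and lamR: "bilin sV sL sV lamR"
  shows "bihom_skew (sum_bracket \<delta> \<theta> lamL lamR) (sum_map \<alpha> \<alpha>V) (sum_map \<beta> \<beta>V) \<longleftrightarrow>
    bihom_skew \<theta> \<alpha> \<beta> \<and> (\<forall>y v. lamR (\<beta>V v) (\<alpha> y) = - lamL (\<beta> y) (\<alpha>V v))"
    (is "?skew \<longleftrightarrow> ?rhs")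
proof
  assume ?skew
  then have skew: "sum_bracket \<delta> \<theta> lamL lamR (sum_map \<beta> \<beta>V X) (sum_map \<alpha> \<alpha>V Y)
      = - sum_bracket \<delta> \<theta> lamL lamR (sum_map \<beta> \<beta>V Y) (sum_map \<alpha> \<alpha>V X)" for X Y
    unfolding bihom_skew_def by blast
  note zero_simps = sum_map_def bihom_lie_zero_simps[OF L]
    bihom_lie_zero_simps(1,2)[OF V[unfolded abelian_bihom_lie_def]]
    bilin_simps[OF \<theta>] bilin_simps[OF lamL] bilin_simps[OF lamR]
  have "\<theta> (\<beta> x) (\<alpha> y) = - \<theta> (\<beta> y) (\<alpha> x)" for x y
    using skew[of "(x, 0)" "(y, 0)"] by (simp add: zero_simps)
  moreover have "lamR (\<beta>V v) (\<alpha> y) = - lamL (\<beta> y) (\<alpha>V v)" for y v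
    using skew[of "(0, v)" "(y, 0)"] by (simp add: zero_simps)
  ultimately show ?rhs
    unfolding bihom_skew_def by blast
next
  assume ?rhs
  then have \<theta>_skew: "\<theta> (\<beta> x) (\<alpha> y) = - \<theta> (\<beta> y) (\<alpha> x)"
    and lamR_skew: "lamR (\<beta>V v) (\<alpha> y) = - lamL (\<beta> y) (\<alpha>V v)" for x y v
    unfolding bihom_skew_def by blast+
  have \<delta>_skew: "\<delta> (\<beta> x) (\<alpha> y) = - \<delta> (\<beta> y) (\<alpha> x)" for x y
    using L unfolding bihom_lie_def by blast
  show ?skew
    unfolding bihom_skew_def
  proof (intro allI)
    fix X Y
    show "sum_bracket \<delta> \<theta> lamL lamR (sum_map \<beta> \<beta>V X) (sum_map \<alpha> \<alpha>V Y)
        = - sum_bracket \<delta> \<theta> lamL lamR (sum_map \<beta> \<beta>V Y) (sum_map \<alpha> \<alpha>V X)"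
      by (simp add: sum_bracket_def sum_map_def \<delta>_skew[of "fst X"] \<theta>_skew[of "fst X"] lamR_skew)
  qed
qed

lemma bihom_jacobi_sum_bracketD:
  assumes L: "bihom_lie sL \<delta> \<alpha> \<beta>" and V: "abelian_bihom_lie sV \<alpha>V \<beta>V"
    and \<theta>: "bilin sL sL sV \<theta>" and lamL: "bilin sL sV sV lamL" and lamR: "bilin sV sL sV lamR"
    and \<theta>_skew: "bihom_skew \<theta> \<alpha> \<beta>"
    and jacobi: "bihom_jacobi (sum_bracket \<delta> \<theta> lamL lamR) (sum_map \<alpha> \<alpha>V) (sum_map \<beta> \<beta>V)"
  shows "\<theta> (\<beta> (\<beta> x)) (\<delta> (\<beta> y) (\<alpha> z)) - \<theta> (\<beta> (\<beta> y)) (\<delta> (\<beta> x) (\<alpha> z))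
           + \<theta> (\<beta> (\<beta> z)) (\<delta> (\<beta> x) (\<alpha> y))
           + lamL (\<beta> (\<beta> x)) (\<theta> (\<beta> y) (\<alpha> z)) - lamL (\<beta> (\<beta> y)) (\<theta> (\<beta> x) (\<alpha> z))
           + lamL (\<beta> (\<beta> z)) (\<theta> (\<beta> x) (\<alpha> y)) = 0"
    and "lamL (\<beta> (\<beta> x)) (lamL (\<beta> y) (\<alpha>V v)) + lamL (\<beta> (\<beta> y)) (lamR (\<beta>V v) (\<alpha> x))
           + lamR (\<beta>V (\<beta>V v)) (\<delta> (\<beta> x) (\<alpha> y)) = 0"
proof -
  note zero_simps = sum_map_def bihom_lie_zero_simps[OF L]
    bihom_lie_zero_simps(1,2)[OF V[unfolded abelian_bihom_lie_def]]
    bilin_simps[OF \<theta>] bilin_simps[OF lamL] bilin_simps[OF lamR]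
  have jac: "bihom_jacobiator (sum_bracket \<delta> \<theta> lamL lamR) (sum_map \<alpha> \<alpha>V) (sum_map \<beta> \<beta>V) X Y Z = 0"
    for X Y Z
    using jacobi unfolding bihom_jacobi_def by blast
  have \<delta>_skew: "\<delta> (\<beta> z) (\<alpha> x) = - \<delta> (\<beta> x) (\<alpha> z)"
    using L unfolding bihom_lie_def by blast
  have "\<theta> (\<beta> (\<beta> x)) (\<delta> (\<beta> y) (\<alpha> z)) - \<theta> (\<beta> (\<beta> y)) (\<delta> (\<beta> x) (\<alpha> z))
           + \<theta> (\<beta> (\<beta> z)) (\<delta> (\<beta> x) (\<alpha> y))
           + lamL (\<beta> (\<beta> x)) (\<theta> (\<beta> y) (\<alpha> z)) - lamL (\<beta> (\<beta> y)) (\<theta> (\<beta> x) (\<alpha> z))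
           + lamL (\<beta> (\<beta> z)) (\<theta> (\<beta> x) (\<alpha> y))
      = snd (bihom_jacobiator (sum_bracket \<delta> \<theta> lamL lamR) (sum_map \<alpha> \<alpha>V) (sum_map \<beta> \<beta>V) (x, 0) (y, 0) (z, 0))"
    using \<theta>_skew[unfolded bihom_skew_def, rule_format, of z x]
    by (simp add: bihom_jacobiator_def zero_simps \<delta>_skew algebra_simps)
  then show "\<theta> (\<beta> (\<beta> x)) (\<delta> (\<beta> y) (\<alpha> z)) - \<theta> (\<beta> (\<beta> y)) (\<delta> (\<beta> x) (\<alpha> z))
           + \<theta> (\<beta> (\<beta> z)) (\<delta> (\<beta> x) (\<alpha> y))
           + lamL (\<beta> (\<beta> x)) (\<theta> (\<beta> y) (\<alpha> z)) - lamL (\<beta> (\<beta> y)) (\<theta> (\<beta> x) (\<alpha> z))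
           + lamL (\<beta> (\<beta> z)) (\<theta> (\<beta> x) (\<alpha> y)) = 0"
    by (simp add: jac)
  show "lamL (\<beta> (\<beta> x)) (lamL (\<beta> y) (\<alpha>V v)) + lamL (\<beta> (\<beta> y)) (lamR (\<beta>V v) (\<alpha> x))
           + lamR (\<beta>V (\<beta>V v)) (\<delta> (\<beta> x) (\<alpha> y)) = 0"
    using jac[of "(x, 0)" "(y, 0)" "(0, v)"]
    by (simp add: bihom_jacobiator_def zero_simps zero_prod_def)
qed

lemma bihom_jacobi_sum_bracketI:
  assumes L: "bihom_lie sL \<delta> \<alpha> \<beta>"
    and \<theta>: "bilin sL sL sV \<theta>" and lamL: "bilin sL sV sV lamL" and lamR: "bilin sV sL sV lamR"
    and \<theta>_skew: "bihom_skew \<theta> \<alpha> \<beta>"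
    and cocycle: "\<And>x y z. \<theta> (\<beta> (\<beta> x)) (\<delta> (\<beta> y) (\<alpha> z)) - \<theta> (\<beta> (\<beta> y)) (\<delta> (\<beta> x) (\<alpha> z))
           + \<theta> (\<beta> (\<beta> z)) (\<delta> (\<beta> x) (\<alpha> y))
           + lamL (\<beta> (\<beta> x)) (\<theta> (\<beta> y) (\<alpha> z)) - lamL (\<beta> (\<beta> y)) (\<theta> (\<beta> x) (\<alpha> z))
           + lamL (\<beta> (\<beta> z)) (\<theta> (\<beta> x) (\<alpha> y)) = 0"
    and rep: "\<And>x y v. lamL (\<beta> (\<beta> x)) (lamL (\<beta> y) (\<alpha>V v)) + lamL (\<beta> (\<beta> y)) (lamR (\<beta>V v) (\<alpha> x))
           + lamR (\<beta>V (\<beta>V v)) (\<delta> (\<beta> x) (\<alpha> y)) = 0"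
  shows "bihom_jacobi (sum_bracket \<delta> \<theta> lamL lamR) (sum_map \<alpha> \<alpha>V) (sum_map \<beta> \<beta>V)"
  unfolding bihom_jacobi_def split_paired_All
proof (intro allI)
  fix x u y v z w
  let ?J = "bihom_jacobiator (sum_bracket \<delta> \<theta> lamL lamR) (sum_map \<alpha> \<alpha>V) (sum_map \<beta> \<beta>V)
    (x, u) (y, v) (z, w)"
  have \<delta>_skew: "\<delta> (\<beta> z) (\<alpha> x) = - \<delta> (\<beta> x) (\<alpha> z)"
    using L unfolding bihom_lie_def by blast
  have "fst ?J = bihom_jacobiator \<delta> \<alpha> \<beta> x y z"
    by (simp add: bihom_jacobiator_def sum_map_def)
  also have "\<dots> = 0"
    using L by (simp add: bihom_lie_iff bihom_jacobi_def)
  finally have "fst ?J = 0" .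
  moreover
  have "snd ?J = (\<theta> (\<beta> (\<beta> x)) (\<delta> (\<beta> y) (\<alpha> z)) - \<theta> (\<beta> (\<beta> y)) (\<delta> (\<beta> x) (\<alpha> z))
           + \<theta> (\<beta> (\<beta> z)) (\<delta> (\<beta> x) (\<alpha> y))
           + lamL (\<beta> (\<beta> x)) (\<theta> (\<beta> y) (\<alpha> z)) - lamL (\<beta> (\<beta> y)) (\<theta> (\<beta> x) (\<alpha> z))
           + lamL (\<beta> (\<beta> z)) (\<theta> (\<beta> x) (\<alpha> y)))
      + (lamL (\<beta> (\<beta> x)) (lamL (\<beta> y) (\<alpha>V w)) + lamL (\<beta> (\<beta> y)) (lamR (\<beta>V w) (\<alpha> x))
           + lamR (\<beta>V (\<beta>V w)) (\<delta> (\<beta> x) (\<alpha> y)))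
      + (lamL (\<beta> (\<beta> y)) (lamL (\<beta> z) (\<alpha>V u)) + lamL (\<beta> (\<beta> z)) (lamR (\<beta>V u) (\<alpha> y))
           + lamR (\<beta>V (\<beta>V u)) (\<delta> (\<beta> y) (\<alpha> z)))
      + (lamL (\<beta> (\<beta> z)) (lamL (\<beta> x) (\<alpha>V v)) + lamL (\<beta> (\<beta> x)) (lamR (\<beta>V v) (\<alpha> z))
           + lamR (\<beta>V (\<beta>V v)) (\<delta> (\<beta> z) (\<alpha> x)))"
    using \<theta>_skew[unfolded bihom_skew_def, rule_format, of z x]
    by (simp add: bihom_jacobiator_def sum_map_def \<delta>_skew algebra_simps
        bilin_simps[OF \<theta>] bilin_simps[OF lamL] bilin_simps[OF lamR])
  then have "snd ?J = 0"
    by (simp only: cocycle rep add_0)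
  ultimately show "?J = 0"
    by (simp add: prod_eq_iff)
qed

lemma bihom_lie_sum_bracket_iff:
  assumes L: "bihom_lie sL \<delta> \<alpha> \<beta>" and V: "abelian_bihom_lie sV \<alpha>V \<beta>V"
    and \<theta>: "bilin sL sL sV \<theta>" and lamL: "bilin sL sV sV lamL" and lamR: "bilin sV sL sV lamR"
  shows "bihom_lie (sum_scale sL sV) (sum_bracket \<delta> \<theta> lamL lamR) (sum_map \<alpha> \<alpha>V) (sum_map \<beta> \<beta>V)
    \<longleftrightarrow> bihom_rep sL \<delta> \<alpha> \<beta> sV \<alpha>V \<beta>V lamL lamR \<and> bihom_2cocycle sL \<delta> \<alpha> \<beta> sV lamL \<theta>"
proof -
  have "vector_space sL" "vector_space sV" "bilin sL sL sL \<delta>"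
    using L V by (simp_all add: bihom_lie_iff abelian_bihom_lie_def)
  then have "bilin (sum_scale sL sV) (sum_scale sL sV) (sum_scale sL sV) (sum_bracket \<delta> \<theta> lamL lamR)"
    using \<theta> lamL lamR by (rule bilin_sum_bracket)
  then have "bihom_lie (sum_scale sL sV) (sum_bracket \<delta> \<theta> lamL lamR) (sum_map \<alpha> \<alpha>V) (sum_map \<beta> \<beta>V)
    \<longleftrightarrow> bihom_skew \<theta> \<alpha> \<beta> \<and> (\<forall>y v. lamR (\<beta>V v) (\<alpha> y) = - lamL (\<beta> y) (\<alpha>V v)) \<and>
        bihom_jacobi (sum_bracket \<delta> \<theta> lamL lamR) (sum_map \<alpha> \<alpha>V) (sum_map \<beta> \<beta>V)"
    by (simp add: bihom_lie_sum_scale_iff[OF L V] bihom_skew_sum_bracket_iff[OF L V \<theta> lamL lamR])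
  also have "\<dots> \<longleftrightarrow> bihom_rep sL \<delta> \<alpha> \<beta> sV \<alpha>V \<beta>V lamL lamR \<and> bihom_2cocycle sL \<delta> \<alpha> \<beta> sV lamL \<theta>"
    using bihom_jacobi_sum_bracketD[OF L V \<theta> lamL lamR] bihom_jacobi_sum_bracketI[OF L \<theta> lamL lamR]
      \<theta> lamL lamR
    unfolding bihom_rep_def bihom_2cocycle_def bihom_skew_def by blast
  finally show ?thesis .
qed

lemma bihom_extension_inc0_proj0_iff:
  assumes L: "bihom_lie sL \<delta> \<alpha> \<beta>" and V: "abelian_bihom_lie sV \<alpha>V \<beta>V"
    and M: "bihom_lie (sum_scale sL sV) d (sum_map \<alpha> \<alpha>V) (sum_map \<beta> \<beta>V)"
  shows "bihom_extension sV (\<lambda>_ _. 0) \<alpha>V \<beta>V inc0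
      (sum_scale sL sV) d (sum_map \<alpha> \<alpha>V) (sum_map \<beta> \<beta>V) proj0 sL \<delta> \<alpha> \<beta> \<longleftrightarrow>
    (\<forall>p q. fst (d p q) = \<delta> (fst p) (fst q)) \<and> (\<forall>v w. d (0, v) (0, w) = 0)"
proof -
  have V': "bihom_lie sV (\<lambda>_ _. 0) \<alpha>V \<beta>V"
    using V by (simp add: abelian_bihom_lie_def)
  have vs: "vector_space sL" "vector_space sV"
    using L V' by (simp_all add: bihom_lie_iff)
  have inc0_eq: "inc0 = (\<lambda>v. (0, v))" and proj0_eq: "proj0 = fst"
    by (simp_all add: fun_eq_iff inc0_def proj0_def)
  have "bihom_morphism sV (\<lambda>_ _. 0) \<alpha>V \<beta>V (sum_scale sL sV) d (sum_map \<alpha> \<alpha>V) (sum_map \<beta> \<beta>V) inc0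
    \<longleftrightarrow> (\<forall>v w. d (0, v) (0, w) = 0)"
    using linear_Pair_zero_left[OF vs]
    by (auto simp: bihom_morphism_def inc0_eq fun_eq_iff sum_map_def zero_prod_def
        bihom_lie_zero_simps[OF L])
  moreover have "bihom_morphism (sum_scale sL sV) d (sum_map \<alpha> \<alpha>V) (sum_map \<beta> \<beta>V) sL \<delta> \<alpha> \<beta> proj0
    \<longleftrightarrow> (\<forall>p q. fst (d p q) = \<delta> (fst p) (fst q))"
    using linear_fst_sum_scale[OF vs]
    by (simp add: bihom_morphism_def proj0_eq fun_eq_iff sum_map_def)
  moreover have "inj inc0" "surj proj0" "range inc0 = {m. proj0 m = 0}"
    by (auto simp: inj_def inc0_eq proj0_eq surj_def image_iff prod_eq_iff)
  ultimately show ?thesis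
    using L V' M unfolding bihom_extension_def by blast
qed

theorem mainTheorem1:
  fixes sL :: "'k::field \<Rightarrow> 'l::ab_group_add \<Rightarrow> 'l"
    and sV :: "'k \<Rightarrow> 'v::ab_group_add \<Rightarrow> 'v"
    and \<delta> :: "'l \<Rightarrow> 'l \<Rightarrow> 'l" and \<alpha> \<beta> :: "'l \<Rightarrow> 'l"
    and \<alpha>V \<beta>V :: "'v \<Rightarrow> 'v"
    and d :: "'l \<times> 'v \<Rightarrow> 'l \<times> 'v \<Rightarrow> 'l \<times> 'v"
  assumes L: "bihom_lie sL \<delta> \<alpha> \<beta>"
    and V: "abelian_bihom_lie sV \<alpha>V \<beta>V"
    and d: "bilin (sum_scale sL sV) (sum_scale sL sV) (sum_scale sL sV) d"
  shows "(bihom_lie (sum_scale sL sV) d (sum_map \<alpha> \<alpha>V) (sum_map \<beta> \<beta>V) \<and>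
          bihom_extension sV (\<lambda>_ _. 0) \<alpha>V \<beta>V inc0
            (sum_scale sL sV) d (sum_map \<alpha> \<alpha>V) (sum_map \<beta> \<beta>V) proj0 sL \<delta> \<alpha> \<beta>)
    \<longleftrightarrow>
    (\<exists>lamL lamR \<theta>.
       bilin sL sV sV lamL \<and> bilin sV sL sV lamR \<and> bilin sL sL sV \<theta> \<and>
       (\<forall>x y v w. d (x, v) (y, w) = (\<delta> x y, \<theta> x y + lamL x w + lamR v y)) \<and>
       bihom_rep sL \<delta> \<alpha> \<beta> sV \<alpha>V \<beta>V lamL lamR \<and>
       bihom_2cocycle sL \<delta> \<alpha> \<beta> sV lamL \<theta>)"
proof -
  have "vector_space sL" "vector_space sV" "bilin sL sL sL \<delta>"
    using L V by (simp_all add: bihom_lie_iff abelian_bihom_lie_def)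
  note decomposition = sum_bracket_decomposition_iff[OF this d]
  have "bihom_lie (sum_scale sL sV) d (sum_map \<alpha> \<alpha>V) (sum_map \<beta> \<beta>V) \<and>
      bihom_extension sV (\<lambda>_ _. 0) \<alpha>V \<beta>V inc0
        (sum_scale sL sV) d (sum_map \<alpha> \<alpha>V) (sum_map \<beta> \<beta>V) proj0 sL \<delta> \<alpha> \<beta> \<longleftrightarrow>
    (\<exists>lamL lamR \<theta>. bilin sL sV sV lamL \<and> bilin sV sL sV lamR \<and> bilin sL sL sV \<theta> \<and>
      d = sum_bracket \<delta> \<theta> lamL lamR \<and> bihom_lie (sum_scale sL sV) d (sum_map \<alpha> \<alpha>V) (sum_map \<beta> \<beta>V))"
    using bihom_extension_inc0_proj0_iff[OF L V] decomposition by blast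
  also have "\<dots> \<longleftrightarrow> (\<exists>lamL lamR \<theta>. bilin sL sV sV lamL \<and> bilin sV sL sV lamR \<and> bilin sL sL sV \<theta> \<and>
      d = sum_bracket \<delta> \<theta> lamL lamR \<and>
      bihom_rep sL \<delta> \<alpha> \<beta> sV \<alpha>V \<beta>V lamL lamR \<and> bihom_2cocycle sL \<delta> \<alpha> \<beta> sV lamL \<theta>)"
    using bihom_lie_sum_bracket_iff[OF L V] by metis
  finally show ?thesis
    by (simp only: sum_bracket_eq_iff)
qed

end
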